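(* In the setting of the context, let $(l_u,\delta,l_0)\in\widetilde{\mathrm{CC}}(\tilde X)$, choose an isomorphism $\iota:\mathbb{C}((\tilde z))[[\lambda]]\xrightarrow{\sim}l_u$ whose reduction mod $\lambda$ maps $\mathbb{C}[[\tilde z]]$ onto $l_0$, and let $a(\tilde z,\lambda)=\sum_i a_i(\tilde z)\lambda^i\in\mathbb{C}((\tilde z))[[\lambda]]$ be defined by $(\lambda\frac{d}{d\tilde z}+a)d\tilde z=\iota^{-1}\delta\iota$. Then the essential fiber of the functor $\widetilde{\mathrm{Conn}}(\tilde X)\to\widetilde{\mathrm{CC}}(\tilde X)$ over $(l_u,\delta,l_0)$ is either empty or equivalent to a one-point set, and it is non-empty if and only if $a_1(\tilde z)\in\tilde z^{-1}\mathbb{C}[[\tilde z]]$ and $\operatorname{res}_{\tilde z=0}a(\tilde z,\lambda)=-\lambda/2$.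
   Context: Let $t,d\in\mathbb{C}[[z]]$ with $t^2-4d$ having a simple zero at $0$; $\tilde X=\operatorname{Spf}\mathbb{C}[[\tilde z]]$ is the spectral curve $\xi^2-t\xi+d=0$ over $\operatorname{Spf}\mathbb{C}[[z]]$, $\tilde z=\sqrt{t^2-4d}$, and $\mu=\xi\,dz|_{\tilde X}$. A $\lambda$-connection on a module $M$ over $\mathbb{C}((\tilde z))[[\lambda]]$ or $\mathbb{C}[[\tilde z,\lambda]]$ is a $\mathbb{C}[[\lambda]]$-linear $\delta$ with $\delta(fs)=f\delta s+\lambda s\,df$. $\widetilde{\mathrm{Conn}}(\tilde X)$: groupoid of $(l,\delta)$, $l$ free of rank 1 over $\mathbb{C}[[\tilde z,\lambda]]$, $\delta:l\to\tilde z^{-1}l\,d\tilde z$ a $\lambda$-connection with residue $-\lambda/2$ and reduction mod $\lambda$ equal to $\mu$. $\widetilde{\mathrm{CC}}(\tilde X)$: groupoid of $(l_u,\delta,l_0)$, $l_u$ free of rank 1 over $\mathbb{C}((\tilde z))[[\lambda]]$, $\delta:l_u\to l_u\,d\tilde z$ a $\lambda$-connection with reduction mod $\lambda$ equal to $\mu$, $l_0$ a $\mathbb{C}[[\tilde z]]$-lattice in $l_u/\lambda l_u$. Morphisms: isomorphisms respecting all structure. The functor sends $(l,\delta)\mapsto(l\otimes\mathbb{C}((\tilde z)),\delta,l/\lambda l)$. The essential fiber of a functor $F:G_1\to G_2$ over $\gamma_2$ is the groupoid of pairs $(\gamma_1,f)$ with $\gamma_1\in G_1$ and $f:F(\gamma_1)\xrightarrow{\sim}\gamma_2$.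 *)

theory Defs
  imports "HOL-Computational_Algebra.Computational_Algebra"
begin

text \<open>C[[zt]] = complex fps; C((zt)) = complex fls;
  C((zt))[[lambda]] = complex fls fps (outer variable lambda);
  C[[zt,lambda]] = complex fps fps (outer variable lambda, coefficients in C[[zt]]).
  One-forms f d(zt) are represented by their coefficient f.\<close>

definition lam :: "complex fls fps" where
  "lam = fps_X"

definition zinv :: "complex fls fps" where
  "zinv = fps_const (fls_X_intpow (-1))"

definition dzt :: "complex fls fps \<Rightarrow> complex fls fps" where
  "dzt s = Abs_fps (\<lambda>n. fls_deriv (s $ n))"

definition emb :: "complex fps fps \<Rightarrow> complex fls fps" where
  "emb b = Abs_fps (\<lambda>n. fps_to_fls (b $ n))"

definition is_unit_ser :: "'a::comm_ring_1 \<Rightarrow> bool" where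
  "is_unit_ser g \<longleftrightarrow> (\<exists>k. g * k = 1)"

text \<open>Spectral curve: w(zt) is the image of z under C[[z]] -> C[[zt]], characterised by
  w(0)=0 and (t^2-4d)(w(zt)) = zt^2; xi = (t(w) + zt)/2 and mu = xi dz = mu_coeff d(zt).\<close>
definition mu_coeff :: "complex fps \<Rightarrow> complex fps \<Rightarrow> complex fps \<Rightarrow> complex fps" where
  "mu_coeff t d w = fps_const (1/2) * ((t oo w) + fps_X) * fps_deriv w"

text \<open>lambda-connection on l_u = C((zt))[[lambda]] (Leibniz rule; C[[lambda]]-linearity follows).\<close>
definition lambda_conn :: "(complex fls fps \<Rightarrow> complex fls fps) \<Rightarrow> bool" where
  "lambda_conn D \<longleftrightarrow> (\<forall>f s. D (f * s) = f * D s + lam * dzt f * s)"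

definition is_lattice :: "complex fls set \<Rightarrow> bool" where
  "is_lattice L \<longleftrightarrow> (\<exists>c. c \<noteq> 0 \<and> L = range (\<lambda>p. c * fps_to_fls p))"

text \<open>Objects of Conn~ (with l = C[[zt,lambda]] and a chosen generator): the connection form
  beta, giving delta s = lambda ds + zt^(-1) beta s (values in zt^(-1) l d(zt)).\<close>
definition conn_op :: "complex fps fps \<Rightarrow> complex fps fps \<Rightarrow> complex fls fps" where
  "conn_op b s = lam * dzt (emb s) + zinv * emb b * emb s"

definition conn_obj :: "complex fps \<Rightarrow> complex fps fps \<Rightarrow> bool" where
  "conn_obj m b \<longleftrightarrow>
     (\<forall>i. fls_residue ((conn_op b 1) $ i) = (if i = 1 then -1/2 else 0)) \<and>
     (\<forall>s. (conn_op b s) $ 0 = fps_to_fls m * fps_to_fls (s $ 0))"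

definition conn_hom :: "complex fps fps \<Rightarrow> complex fps fps \<Rightarrow> complex fps fps \<Rightarrow> bool" where
  "conn_hom b b' h \<longleftrightarrow> is_unit_ser h \<and> (\<forall>s. conn_op b' (h * s) = emb h * conn_op b s)"

text \<open>The functor: extension of delta to l tensor C((zt)) = C((zt))[[lambda]].\<close>
definition ext_op :: "complex fps fps \<Rightarrow> complex fls fps \<Rightarrow> complex fls fps" where
  "ext_op b s = lam * dzt s + zinv * emb b * s"

text \<open>Objects of the essential fiber over (C((zt))[[lambda]], D, L0): pairs (beta, g),
  g = the isomorphism F(beta) -> (l_u, D, L0) (multiplication by g).\<close>
definition fib_obj ::
  "complex fps \<Rightarrow> (complex fls fps \<Rightarrow> complex fls fps) \<Rightarrow> complex fls set
     \<Rightarrow> complex fps fps \<times> complex fls fps \<Rightarrow> bool" where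
  "fib_obj m D L0 x \<longleftrightarrow> (case x of (b, g) \<Rightarrow>
     conn_obj m b \<and> is_unit_ser g \<and> (\<forall>s. D (g * s) = g * ext_op b s) \<and>
     range (\<lambda>p. (g $ 0) * fps_to_fls p) = L0)"

definition fib_hom ::
  "complex fps fps \<times> complex fls fps \<Rightarrow> complex fps fps \<times> complex fls fps
     \<Rightarrow> complex fps fps \<Rightarrow> bool" where
  "fib_hom x y h \<longleftrightarrow> (case x of (b, g) \<Rightarrow> case y of (b', g') \<Rightarrow>
     conn_hom b b' h \<and> g' * emb h = g)"

end

theory Submission
  imports Defs
begin

(* Two objects of the fibre differ by a gauge transformation r of C((z))[[lambda]] with
   lambda dr = C r, where C is the difference of their connection forms: C_0 = 0 because both
   reduce to mu, and every C_i is regular because the residues agree.  Comparing coefficients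
   of lambda^(n+1) gives r_n' - C_1 r_n = (regular, by induction), and such a first-order
   equation cannot create a pole; so r comes from C[[z,lambda]] and is the unique morphism.

   In the frame iota, an object (beta, g) of the fibre gives a = z^-1 beta - lambda r^-1 dr.
   The coefficients of r^-1 dr have no residue: the lambda^0 one is a logarithmic derivative of a
   unit of C[[z]], and d/d lambda (r^-1 dr) = d (r^-1 d/d lambda r) is exact.  This yields both
   conditions.  Conversely, if they hold, the tail -sum_(n>=1) a_(n+1) lambda^n has a
   primitive V, and the gauge transformation exp V turns a into a_0 + a_1 lambda, which is the
   connection form z^-1 (z mu + p lambda) of an object of Conn when a_1 = z^-1 p. *)

unbundle fps_syntax

section \<open>Derivatives on C((z))[[\<lambda>]]\<close>

lemma dzt_nth [simp]: "dzt s $ n = fls_deriv (s $ n)"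
  by (simp add: dzt_def)

lemma emb_nth [simp]: "emb s $ n = fps_to_fls (s $ n)"
  by (simp add: emb_def)

lemma lam_times_nth [simp]: "(lam * f) $ n = (if n = 0 then 0 else f $ (n - 1))"
  by (simp add: lam_def)

lemma zinv_times_nth [simp]: "(zinv * f) $ n = fls_X_intpow (-1) * f $ n"
  by (simp add: zinv_def)

lemma dzt_one [simp]: "dzt 1 = 0"
  by (rule fps_ext) simp

lemma dzt_mult: "dzt (x * y) = dzt x * y + x * dzt y"
proof (rule fps_ext)
  fix n
  have "dzt (x * y) $ n = (\<Sum>i=0..n. fls_deriv (x$i) * y$(n-i) + x$i * fls_deriv (y$(n-i)))"
    by (simp add: fps_mult_nth fls_deriv_sum add.commute)
  also have "\<dots> = (dzt x * y + x * dzt y) $ n"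
    by (simp only: fps_add_nth fps_mult_nth dzt_nth sum.distrib)
  finally show "dzt (x * y) $ n = (dzt x * y + x * dzt y) $ n" .
qed

lemma dzt_inverse:
  assumes "r $ 0 \<noteq> 0"
  shows "dzt (inverse r) = - dzt r * (inverse r)\<^sup>2"
proof -
  have "0 = dzt (r * inverse r)" using inverse_mult_eq_1'[OF assms] by simp
  then have "0 = inverse r * (dzt r * inverse r + r * dzt (inverse r))" by (simp add: dzt_mult)
  also have "\<dots> = dzt r * (inverse r)\<^sup>2 + dzt (inverse r)"
    using inverse_mult_eq_1[OF assms] by (simp add: algebra_simps power2_eq_square)
  finally show ?thesis by (simp add: eq_neg_iff_add_eq_0 add.commute)
qed

lemma dzt_fps_deriv_commute: "dzt (fps_deriv x) = fps_deriv (dzt x)"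
  by (rule fps_ext) simp

lemma fps_to_fls_sum: "fps_to_fls (sum f A) = (\<Sum>i\<in>A. fps_to_fls (f i))"
  by (induct A rule: infinite_finite_induct) simp_all

lemma emb_mult: "emb (x * y) = emb x * emb y"
  by (rule fps_ext) (simp add: fps_mult_nth fps_to_fls_sum fls_times_fps_to_fls)

lemma emb_one [simp]: "emb 1 = 1"
  by (rule fps_ext) simp

lemma inj_emb: "inj emb"
  by (rule injI, rule fps_ext) (metis emb_nth fps_to_fls_eq_iff)

lemma dzt_log_deriv_commute:
  assumes "r $ 0 \<noteq> 0"
  shows "fps_deriv (dzt r * inverse r) = dzt (fps_deriv r * inverse r)"
  using assms
  by (simp add: dzt_mult dzt_inverse fps_inverse_deriv dzt_fps_deriv_commute algebra_simps)

section \<open>Regular Laurent series\<close>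

lemma range_fps_to_fls_iff: "f \<in> range fps_to_fls \<longleftrightarrow> 0 \<le> fls_subdegree f"
  by (metis fls_regpart_to_fls_trivial fls_subdegree_fls_to_fps_gt0 imageE rangeI)

lemma sum_in_range_fps_to_fls:
  "(\<And>i. i \<in> A \<Longrightarrow> f i \<in> range fps_to_fls) \<Longrightarrow> sum f A \<in> range fps_to_fls"
proof (induct A rule: infinite_finite_induct)
  case (insert x F)
  then obtain p q where "f x = fps_to_fls p" "sum f F = fps_to_fls q" by blast
  then show ?case using insert(1,2) by (metis fps_to_fls_plus rangeI sum.insert)
qed auto

lemma fls_residue_diff: "fls_residue (f - g) = fls_residue f - fls_residue g"
  by simp

text \<open>\<^term>\<open>fls_X_intpow (-1)\<close> abbreviates \<^term>\<open>fls_shift 1 1\<close>, to which the simplifier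
  rewrites it; the following lemmas are therefore applied with \<open>unfolding\<close> or \<open>simp only\<close>.\<close>

lemma fls_X_inv_times_nth:
  fixes f :: "'a::semiring_1 fls"
  shows "(fls_X_intpow (-1) * f) $$ k = f $$ (k + 1)"
  by (subst fls_X_intpow_times_conv_shift(1)) simp

lemma fls_residue_X_inv_times_fps:
  fixes p :: "'a::semiring_1 fps"
  shows "fls_residue (fls_X_intpow (-1) * fps_to_fls p) = p $ 0"
  unfolding fls_residue_def fls_X_inv_times_nth by simp

lemma fls_X_inv_times_fps_X:
  fixes p :: "'a::semiring_1 fps"
  shows "fls_X_intpow (-1) * fps_to_fls (fps_X * p) = fps_to_fls p"
  by (rule fls_eqI) (simp only: fls_X_inv_times_nth, simp add: nat_add_distrib)

lemma fls_X_inv_times_fps_eq_shift: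
  fixes p :: "'a::semiring_1 fps"
  assumes "p $ 0 = 0"
  shows "fls_X_intpow (-1) * fps_to_fls p = fps_to_fls (fps_shift 1 p)"
proof (rule fls_eqI)
  fix k :: int
  show "(fls_X_intpow (-1) * fps_to_fls p) $$ k = fps_to_fls (fps_shift 1 p) $$ k"
    unfolding fls_X_inv_times_nth using assms
    by (cases "k < -1"; cases "k = -1") (auto simp: nat_add_distrib)
qed

text \<open>If \<open>f\<close> had a pole of order \<open>-k > 0\<close>, the coefficient of \<open>z^(k-1)\<close> in
  \<open>f' - e f\<close> would be \<open>k f_k \<noteq> 0\<close>.\<close>

lemma fls_regular_if_deriv_diff_times_regular:
  fixes f :: "'a::field_char_0 fls"
  assumes "fls_deriv f - fps_to_fls e * f \<in> range fps_to_fls"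
  shows "f \<in> range fps_to_fls"
proof (rule ccontr)
  assume "f \<notin> range fps_to_fls"
  then have neg: "fls_subdegree f < 0" by (simp add: range_fps_to_fls_iff)
  define k where "k = fls_subdegree f"
  have "(fps_to_fls e * f) $$ (k - 1) = 0"
    by (rule fls_times_nth_eq0) (use fls_subdegree_fls_to_fps_gt0[of e] in \<open>simp add: k_def\<close>)
  moreover have "fls_subdegree (fls_deriv f - fps_to_fls e * f) \<ge> 0"
    using assms by (simp add: range_fps_to_fls_iff)
  then have "(fls_deriv f - fps_to_fls e * f) $$ (k - 1) = 0"
    using neg by (intro fls_eq0_below_subdegree) (simp add: k_def)
  ultimately have "of_int k * f $$ k = 0" by simp
  moreover have "f $$ k \<noteq> 0"
    using neg unfolding k_def by (metis fls_zero_subdegree less_irrefl nth_fls_subdegree_nonzero)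
  ultimately show False using neg by (simp add: k_def)
qed

lemma same_lattice_imp_ratio_unit:
  fixes x y :: "'a::field fls"
  assumes "range (\<lambda>p. x * fps_to_fls p) = range (\<lambda>p. y * fps_to_fls p)" "y \<noteq> 0"
  shows "\<exists>v. x / y = fps_to_fls v \<and> v $ 0 \<noteq> 0"
proof -
  have "x * fps_to_fls 1 \<in> range (\<lambda>p. y * fps_to_fls p)" using assms(1) by blast
  then obtain v where v: "x = y * fps_to_fls v" by auto
  have "y * fps_to_fls 1 \<in> range (\<lambda>p. x * fps_to_fls p)" using assms(1) by blast
  then obtain v' where v': "y = x * fps_to_fls v'" by auto
  have "y = y * (fps_to_fls v * fps_to_fls v')" using v v' by (metis mult.assoc)
  then have "v * v' = 1" using assms(2) by (simp flip: fls_times_fps_to_fls)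
  then have "v $ 0 \<noteq> 0" by (metis fps_mult_nth_0 fps_one_nth mult_zero_left one_neq_zero)
  then show ?thesis using v assms(2) by auto
qed

lemma range_emb_if_nth_regular:
  assumes "\<And>n. r $ n \<in> range fps_to_fls"
  shows "r \<in> range emb"
proof
  show "r = emb (Abs_fps (\<lambda>n. fls_regpart (r $ n)))"
  proof (rule fps_ext)
    fix n
    obtain p where "r $ n = fps_to_fls p" using assms by blast
    then show "r $ n = emb (Abs_fps (\<lambda>n. fls_regpart (r $ n))) $ n" by simp
  qed
qed simp

section \<open>Logarithmic derivatives and exponentials\<close>

lemma fls_residue_log_dzt_nth:
  assumes "r $ 0 \<noteq> 0" "fls_subdegree (r $ 0) = 0"
  shows "fls_residue ((dzt r * inverse r) $ n) = 0"
proof (cases n)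
  case 0
  then show ?thesis
    using assms fls_residue_deriv_times_inverse_eq_subdegree(1)[of "r $ 0"] by simp
next
  case (Suc j)
  have "fps_deriv (dzt r * inverse r) $ j = dzt (fps_deriv r * inverse r) $ j"
    by (simp only: dzt_log_deriv_commute[OF assms(1)])
  then have "fls_const (of_nat n) * (dzt r * inverse r) $ n
      = fls_deriv ((fps_deriv r * inverse r) $ j)"
    unfolding fps_deriv_nth dzt_nth using Suc by (simp add: fls_of_nat)
  then have "of_nat n * fls_residue ((dzt r * inverse r) $ n) = 0"
    by (metis fls_residue_deriv fls_residue_fls_const_times(1))
  then show ?thesis using Suc by (simp del: of_nat_Suc)
qed

lemma fps_eq_0_if_deriv_eq_times:
  fixes E W :: "'a::{idom,ring_char_0} fps"
  assumes "fps_deriv E = E * W" "E $ 0 = 0"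
  shows "E = 0"
proof -
  have "E $ n = 0" for n
  proof (induct n rule: less_induct)
    case (less n)
    show ?case
    proof (cases n)
      case (Suc m)
      have "of_nat (Suc m) * E $ Suc m = (E * W) $ m"
        using arg_cong[OF assms(1), of "\<lambda>F. F $ m"] by simp
      also have "\<dots> = 0" unfolding fps_mult_nth by (rule sum.neutral) (use less Suc in auto)
      finally show ?thesis using Suc by (simp del: of_nat_Suc)
    qed (use assms in simp)
  qed
  then show ?thesis by (intro fps_ext) simp
qed

text \<open>Take \<open>r = exp V\<close> for a primitive \<open>V\<close> of \<open>T\<close>: then \<open>dzt r - r T\<close> solves a
  linear differential equation in \<open>\<lambda>\<close> with zero initial value.\<close>

lemma dzt_eq_times_solvable:
  assumes "\<And>n. fls_residue (T $ n) = 0" "T $ 0 = 0"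
  shows "\<exists>r. r $ 0 = 1 \<and> dzt r = r * T"
proof -
  define V where "V = Abs_fps (\<lambda>n. fls_integral (T $ n))"
  have dV: "dzt V = T" by (rule fps_ext) (simp add: V_def fls_deriv_fls_integral[OF assms(1)])
  have V0: "V $ 0 = 0" by (simp add: V_def assms(2))
  define r where "r = fps_exp 1 oo V"
  have r0: "r $ 0 = 1" by (simp add: r_def)
  have dr: "fps_deriv r = r * fps_deriv V"
    unfolding r_def by (simp add: fps_compose_deriv[OF V0])
  define E where "E = dzt r - r * T"
  have "fps_deriv E = dzt (fps_deriv r) - fps_deriv (r * T)"
    by (simp add: E_def dzt_fps_deriv_commute del: fps_deriv_mult)
  also have "\<dots> = dzt r * fps_deriv V + r * fps_deriv T - (r * fps_deriv V * T + r * fps_deriv T)"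
    by (simp add: dr dzt_mult dzt_fps_deriv_commute dV)
  also have "\<dots> = E * fps_deriv V"
    by (simp add: E_def algebra_simps)
  finally have "E = 0" by (rule fps_eq_0_if_deriv_eq_times) (simp add: E_def r0 assms(2))
  then show ?thesis using r0 by (auto simp: E_def)
qed

section \<open>Connection forms and gauge transformations\<close>

lemma is_unit_ser_iff_dvd_one: "is_unit_ser g \<longleftrightarrow> g dvd 1"
  by (auto simp: is_unit_ser_def dvd_def)

lemma is_unit_ser_fps_iff [simp]: "is_unit_ser (g :: 'a::field fps) \<longleftrightarrow> g $ 0 \<noteq> 0"
  by (simp add: is_unit_ser_iff_dvd_one)

lemma is_unit_ser_fps_fpsI:
  fixes h :: "'a::field fps fps"
  assumes "h $ 0 $ 0 \<noteq> 0"
  shows "is_unit_ser h"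
  unfolding is_unit_ser_def
  using fps_right_inverse[of h "inverse (h $ 0)"] inverse_mult_eq_1'[OF assms] by blast

definition lconn :: "complex fls fps \<Rightarrow> complex fls fps \<Rightarrow> complex fls fps" where
  "lconn A s = lam * dzt s + A * s"

text \<open>In the paper's notation, \<open>has_conn_form D u A\<close> says
  \<open>(\<lambda> d/dz + A) dz = u\<^sup>-\<^sup>1 D u\<close>.\<close>

definition has_conn_form ::
  "(complex fls fps \<Rightarrow> complex fls fps) \<Rightarrow> complex fls fps \<Rightarrow> complex fls fps \<Rightarrow> bool" where
  "has_conn_form D u A \<longleftrightarrow> (\<forall>s. D (u * s) = u * lconn A s)"

definition conn_form :: "complex fps fps \<Rightarrow> complex fls fps" where
  "conn_form b = zinv * emb b"

lemma ext_op_eq_lconn: "ext_op b = lconn (conn_form b)"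
  by (simp add: ext_op_def lconn_def conn_form_def fun_eq_iff)

lemma conn_op_eq_lconn: "conn_op b s = lconn (conn_form b) (emb s)"
  by (simp add: conn_op_def lconn_def conn_form_def)

lemma conn_form_nth: "conn_form b $ n = fls_X_intpow (-1) * fps_to_fls (b $ n)"
  by (simp add: conn_form_def)

lemma conn_form_residue: "fls_residue (conn_form b $ i) = b $ i $ 0"
  by (simp only: conn_form_nth fls_residue_X_inv_times_fps)

lemma lconn_one [simp]: "lconn A 1 = A"
  by (simp add: lconn_def)

lemma lconn_gauge:
  assumes "lconn A r = r * B"
  shows "lconn A (r * s) = r * lconn B s"
proof -
  have "lconn A (r * s) = lconn A r * s + lam * r * dzt s"
    by (simp add: lconn_def dzt_mult algebra_simps)
  also have "\<dots> = r * lconn B s"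
    unfolding assms by (simp add: lconn_def algebra_simps)
  finally show ?thesis .
qed

lemma has_conn_form_change_frame:
  assumes "u \<noteq> 0" "has_conn_form D u A"
  shows "has_conn_form D (u * r) B \<longleftrightarrow> lconn A r = r * B"
proof
  assume "has_conn_form D (u * r) B"
  then have "u * lconn A r = u * (r * B)"
    using assms(2) unfolding has_conn_form_def by (metis lconn_one mult.assoc mult_1_right)
  then show "lconn A r = r * B" using assms(1) by simp
next
  assume "lconn A r = r * B"
  then show "has_conn_form D (u * r) B"
    using assms(2) unfolding has_conn_form_def by (simp add: lconn_gauge mult.assoc)
qed

lemma gauge_conn_form_eq:
  assumes "r $ 0 \<noteq> 0" "lconn A r = r * B"
  shows "A = B - lam * (dzt r * inverse r)"
proof -
  have "A = (lam * dzt r + A * r) * inverse r - lam * (dzt r * inverse r)"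
    using inverse_mult_eq_1'[OF assms(1)] by (simp add: algebra_simps)
  also have "\<dots> = B - lam * (dzt r * inverse r)"
    using assms inverse_mult_eq_1'[OF assms(1)]
    by (simp add: lconn_def mult.assoc mult.left_commute)
  finally show ?thesis .
qed

lemma has_conn_form_nth_0:
  assumes "has_conn_form D u A" "u $ 0 \<noteq> 0" "\<forall>s. D s $ 0 = M * s $ 0"
  shows "A $ 0 = M"
proof -
  have "u $ 0 * A $ 0 = u $ 0 * M"
    using assms(1,3) unfolding has_conn_form_def
    by (metis fps_mult_nth_0 lconn_one mult.commute mult_1_right)
  then show ?thesis using assms(2) by simp
qed

lemma same_lattice_frames_gauge:
  assumes Du: "has_conn_form D u A" and u0: "u $ 0 \<noteq> 0"
    and Lu: "range (\<lambda>p. u $ 0 * fps_to_fls p) = L"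
    and Dg: "has_conn_form D g B" and Lg: "range (\<lambda>p. g $ 0 * fps_to_fls p) = L"
  obtains r v where "g = u * r" "lconn A r = r * B" "r $ 0 = fps_to_fls v" "v $ 0 \<noteq> 0"
proof -
  define r where "r = inverse u * g"
  have g: "g = u * r"
    using inverse_mult_eq_1'[OF u0] by (simp add: r_def mult.assoc[symmetric])
  have "u \<noteq> 0" using u0 by auto
  then have "lconn A r = r * B"
    using has_conn_form_change_frame[OF _ Du] Dg g by blast
  moreover obtain v where v: "g $ 0 / u $ 0 = fps_to_fls v" "v $ 0 \<noteq> 0"
    using same_lattice_imp_ratio_unit[of "g $ 0" "u $ 0"] Lg Lu u0 by auto
  moreover have "r $ 0 = fps_to_fls v"
    using v by (simp add: r_def divide_inverse mult.commute)
  ultimately show thesis using that g by blast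
qed

text \<open>Comparing coefficients of \<open>\<lambda>^(n+1)\<close> gives
  \<open>r_n' - C_1 r_n = \<Sum>i=2..n+1. C_i r_(n+1-i)\<close>, regular by induction.\<close>

lemma gauge_nth_regular:
  assumes gauge: "lam * dzt r = C * r" and "C $ 0 = 0"
    and C_reg: "\<And>i. C $ i \<in> range fps_to_fls" and "r $ 0 \<in> range fps_to_fls"
  shows "r $ n \<in> range fps_to_fls"
proof (induct n rule: less_induct)
  case (less n)
  show ?case
  proof (cases n)
    case 0
    then show ?thesis using assms(4) by simp
  next
    case (Suc l)
    have "fls_deriv (r $ n) = (lam * dzt r) $ Suc n" by simp
    also have "\<dots> = (\<Sum>i=0..Suc n. C $ i * r $ (Suc n - i))" by (simp only: gauge fps_mult_nth)
    also have "\<dots> = C $ 1 * r $ n + (\<Sum>i=2..Suc n. C $ i * r $ (Suc n - i))"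
      using assms(2) by (simp add: sum.atLeast_Suc_atMost numeral_2_eq_2)
    finally have "fls_deriv (r $ n) - C $ 1 * r $ n = (\<Sum>i=2..Suc n. C $ i * r $ (Suc n - i))"
      by simp
    also have "\<dots> \<in> range fps_to_fls"
    proof (rule sum_in_range_fps_to_fls)
      fix i assume "i \<in> {2..Suc n}"
      then have "Suc n - i < n" by auto
      then have "r $ (Suc n - i) \<in> range fps_to_fls" by (rule less)
      then show "C $ i * r $ (Suc n - i) \<in> range fps_to_fls"
        using C_reg[of i] by (auto simp flip: fls_times_fps_to_fls)
    qed
    moreover obtain e where "C $ 1 = fps_to_fls e" using C_reg[of 1] by blast
    ultimately show ?thesis by (metis fls_regular_if_deriv_diff_times_regular)
  qed
qed

section \<open>The essential fibre\<close>

lemma conn_op_one: "conn_op b 1 = conn_form b"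
  by (simp add: conn_op_eq_lconn)

lemma conn_obj_conn_form_nth_0:
  assumes "conn_obj m b"
  shows "conn_form b $ 0 = fps_to_fls m"
proof -
  have "conn_op b 1 $ 0 = fps_to_fls m * fps_to_fls ((1 :: complex fps fps) $ 0)"
    using assms unfolding conn_obj_def by blast
  then show ?thesis by (simp add: conn_op_one)
qed

lemma conn_obj_nth_0:
  assumes "conn_obj m b"
  shows "b $ i $ 0 = (if i = 1 then -1/2 else 0)"
proof -
  have "fls_residue (conn_op b 1 $ i) = (if i = 1 then -1/2 else 0)"
    using assms unfolding conn_obj_def by blast
  then show ?thesis by (simp only: conn_op_one conn_form_residue)
qed

lemma fib_obj_iff:
  "fib_obj m D L0 (b, g) \<longleftrightarrow>
     conn_obj m b \<and> g $ 0 \<noteq> 0 \<and> has_conn_form D g (conn_form b) \<and>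
     range (\<lambda>p. g $ 0 * fps_to_fls p) = L0"
  by (simp add: fib_obj_def has_conn_form_def ext_op_eq_lconn)

lemma fib_obj_pair_gauge:
  assumes "fib_obj m D L0 (b, g)" "fib_obj m D L0 (b', g')"
  obtains h where "g = g' * emb h" "h $ 0 $ 0 \<noteq> 0"
    "lconn (conn_form b') (emb h) = emb h * conn_form b"
proof -
  from assms(1) have b: "conn_obj m b" and Dg: "has_conn_form D g (conn_form b)"
    and Lg: "range (\<lambda>p. g $ 0 * fps_to_fls p) = L0"
    by (simp_all add: fib_obj_iff)
  from assms(2) have b': "conn_obj m b'" and g'0: "g' $ 0 \<noteq> 0"
    and Dg': "has_conn_form D g' (conn_form b')"
    and Lg': "range (\<lambda>p. g' $ 0 * fps_to_fls p) = L0"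
    by (simp_all add: fib_obj_iff)
  obtain r v where g: "g = g' * r" and gauge: "lconn (conn_form b') r = r * conn_form b"
    and r0: "r $ 0 = fps_to_fls v" and v0: "v $ 0 \<noteq> 0"
    using same_lattice_frames_gauge[OF Dg' g'0 Lg' Dg Lg] by blast
  have "r \<in> range emb"
  proof (rule range_emb_if_nth_regular, rule gauge_nth_regular)
    show "lam * dzt r = (conn_form b - conn_form b') * r"
      using gauge by (simp add: lconn_def algebra_simps)
    show "(conn_form b - conn_form b') $ 0 = 0"
      using b b' by (simp add: conn_obj_conn_form_nth_0)
    show "(conn_form b - conn_form b') $ i \<in> range fps_to_fls" for i
    proof -
      have "(conn_form b - conn_form b') $ i = fls_X_intpow (-1) * fps_to_fls (b $ i - b' $ i)"
        by (simp add: conn_form_nth right_diff_distrib)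
      also have "\<dots> = fps_to_fls (fps_shift 1 (b $ i - b' $ i))"
        using b b' by (intro fls_X_inv_times_fps_eq_shift) (simp add: conn_obj_nth_0)
      finally show ?thesis by simp
    qed
    show "r $ 0 \<in> range fps_to_fls" using r0 by simp
  qed
  then obtain h where h: "r = emb h" by blast
  have "h $ 0 = v" using r0 by (simp add: h)
  then show thesis using that[of h] g gauge v0 h by simp
qed

lemma fib_hom_ex1:
  assumes "fib_obj m D L0 (b, g)" "fib_obj m D L0 (b', g')"
  shows "\<exists>!h. fib_hom (b, g) (b', g') h"
proof -
  obtain h where g: "g = g' * emb h" and h0: "h $ 0 $ 0 \<noteq> 0"
    and gauge: "lconn (conn_form b') (emb h) = emb h * conn_form b"
    using fib_obj_pair_gauge[OF assms] .
  have "conn_hom b b' h"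
    unfolding conn_hom_def conn_op_eq_lconn
    using is_unit_ser_fps_fpsI[OF h0] lconn_gauge[OF gauge] by (simp add: emb_mult)
  then have hom: "fib_hom (b, g) (b', g') h" by (simp add: fib_hom_def g)
  have "g' \<noteq> 0" using assms(2) by (auto simp: fib_obj_iff)
  then have "fib_hom (b, g) (b', g') k \<Longrightarrow> k = h" for k
    using inj_emb by (auto simp: fib_hom_def g inj_eq)
  with hom show ?thesis by blast
qed

lemma fib_obj_imp_criterion:
  assumes Du: "has_conn_form D u a" and u0: "u $ 0 \<noteq> 0"
    and Lu: "range (\<lambda>p. u $ 0 * fps_to_fls p) = L0" and obj: "fib_obj m D L0 (b, g)"
  shows "(\<exists>p. a $ 1 = fls_X_intpow (-1) * fps_to_fls p) \<and>
         (\<forall>i. fls_residue (a $ i) = (if i = 1 then -1/2 else 0))"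
proof -
  from obj have b: "conn_obj m b" and Dg: "has_conn_form D g (conn_form b)"
    and Lg: "range (\<lambda>p. g $ 0 * fps_to_fls p) = L0"
    by (simp_all add: fib_obj_iff)
  obtain r v where gauge: "lconn a r = r * conn_form b"
    and r0: "r $ 0 = fps_to_fls v" and v0: "v $ 0 \<noteq> 0"
    using same_lattice_frames_gauge[OF Du u0 Lu Dg Lg] by blast
  then have r0_nz: "r $ 0 \<noteq> 0" and r0_sub: "fls_subdegree (r $ 0) = 0"
    by (auto simp: fls_subdegree_fls_to_fps)
  define q where "q = dzt r * inverse r"
  have a: "a $ i = conn_form b $ i - (if i = 0 then 0 else q $ (i - 1))" for i
    by (subst gauge_conn_form_eq[OF r0_nz gauge]) (simp add: q_def)
  have res_q: "fls_residue (q $ j) = 0" for j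
    unfolding q_def using r0_nz r0_sub by (rule fls_residue_log_dzt_nth)
  define w where "w = fps_deriv v * inverse v"
  have "q $ 0 = fps_to_fls w"
    using r0 v0 by (simp add: q_def w_def fls_deriv_fps_to_fls fls_inverse_fps_to_fls
        fls_times_fps_to_fls)
  then have "a $ 1 = fls_X_intpow (-1) * fps_to_fls (b $ 1 - fps_X * w)"
    using a[of 1] fls_X_inv_times_fps_X[of w] by (simp add: conn_form_nth algebra_simps)
  moreover have "fls_residue (a $ i) = b $ i $ 0" for i
    using a[of i] res_q[of "i - 1"]
    by (cases i) (simp_all only: fls_residue_diff conn_form_residue, simp_all)
  ultimately show ?thesis by (metis conn_obj_nth_0[OF b])
qed

text \<open>The gauge transformation \<open>r\<close> with \<open>dzt r = r T\<close> cancels all terms of \<open>a\<close> of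
  \<open>\<lambda>\<close>-order at least 2.\<close>

lemma criterion_imp_fib_obj:
  assumes Du: "has_conn_form D u a" and u0: "u $ 0 \<noteq> 0"
    and Lu: "range (\<lambda>p. u $ 0 * fps_to_fls p) = L0"
    and D0: "\<forall>s. D s $ 0 = fps_to_fls m * s $ 0"
    and a1: "a $ 1 = fls_X_intpow (-1) * fps_to_fls p"
    and res_a: "\<forall>i. fls_residue (a $ i) = (if i = 1 then -1/2 else 0)"
  shows "\<exists>x. fib_obj m D L0 x"
proof -
  have a0: "a $ 0 = fps_to_fls m" using has_conn_form_nth_0[OF Du u0 D0] .
  define T where "T = Abs_fps (\<lambda>n. if n = 0 then 0 else - a $ (n + 1))"
  have "fls_residue (T $ n) = 0" for n
    using res_a[rule_format, of "n + 1"] by (simp add: T_def)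
  then obtain r where r0: "r $ 0 = 1" and dr: "dzt r = r * T"
    using dzt_eq_times_solvable[of T] by (auto simp: T_def)
  define b where "b = fps_const (fps_X * m) + fps_X * fps_const p"
  have B: "conn_form b $ n = (if n = 0 then fps_to_fls m else if n = 1 then a $ 1 else 0)" for n
  proof -
    have bn: "b $ n = (if n = 0 then fps_X * m else if n = 1 then p else 0)" by (simp add: b_def)
    show ?thesis
      by (simp only: conn_form_nth bn a1 if_distrib[of fps_to_fls]
          if_distrib[of "times (fls_X_intpow (-1))"] fls_X_inv_times_fps_X fps_zero_to_fls
          mult_zero_right)
  qed
  have "conn_form b = lam * T + a"
    by (rule fps_ext) (simp add: B T_def a0)
  then have "lconn a r = r * conn_form b" by (simp add: lconn_def dr algebra_simps)
  moreover have "u \<noteq> 0" using u0 by auto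
  ultimately have Dg: "has_conn_form D (u * r) (conn_form b)"
    using has_conn_form_change_frame[OF _ Du] by blast
  have "conn_obj m b"
    unfolding conn_obj_def conn_op_eq_lconn
  proof (intro conjI allI)
    show "fls_residue (lconn (conn_form b) (emb 1) $ i) = (if i = 1 then -1/2 else 0)" for i
      using res_a[rule_format, of 1] by (simp add: B)
    show "lconn (conn_form b) (emb s) $ 0 = fps_to_fls m * fps_to_fls (s $ 0)" for s
      by (simp add: lconn_def B lam_def)
  qed
  then have "fib_obj m D L0 (b, u * r)"
    using Dg Lu u0 by (simp add: fib_obj_iff r0)
  then show ?thesis by blast
qed

theorem corollary4p9:
  fixes t d w :: "complex fps"
    and D :: "complex fls fps \<Rightarrow> complex fls fps"
    and L0 :: "complex fls set"
    and u a :: "complex fls fps"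
  assumes simple_zero: "(t^2 - 4 * d) $ 0 = 0" "(t^2 - 4 * d) $ 1 \<noteq> 0"
    and spectral: "w $ 0 = 0" "(t^2 - 4 * d) oo w = fps_X ^ 2"
    and CC_obj: "lambda_conn D"
      "\<forall>s. (D s) $ 0 = fps_to_fls (mu_coeff t d w) * (s $ 0)"
      "is_lattice L0"
    and iota: "is_unit_ser u" "range (\<lambda>p. (u $ 0) * fps_to_fls p) = L0"
    and a_def: "\<forall>s. D (u * s) = u * (lam * dzt s + a * s)"
  shows "(\<forall>x y. fib_obj (mu_coeff t d w) D L0 x \<and> fib_obj (mu_coeff t d w) D L0 y
              \<longrightarrow> (\<exists>!h. fib_hom x y h))
       \<and> ((\<exists>x. fib_obj (mu_coeff t d w) D L0 x) \<longleftrightarrow>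
            ((\<exists>p. a $ 1 = fls_X_intpow (-1) * fps_to_fls p) \<and>
             (\<forall>i. fls_residue (a $ i) = (if i = 1 then -1/2 else 0))))"
proof -
  let ?m = "mu_coeff t d w"
  let ?criterion = "(\<exists>p. a $ 1 = fls_X_intpow (-1) * fps_to_fls p) \<and>
    (\<forall>i. fls_residue (a $ i) = (if i = 1 then -1/2 else 0))"
  have u0: "u $ 0 \<noteq> 0" using iota(1) by simp
  have Du: "has_conn_form D u a" using a_def by (simp add: has_conn_form_def lconn_def)
  have "\<exists>!h. fib_hom x y h" if "fib_obj ?m D L0 x" "fib_obj ?m D L0 y" for x y
    using that by (cases x, cases y) (simp add: fib_hom_ex1)
  moreover have "(\<exists>x. fib_obj ?m D L0 x) \<longleftrightarrow> ?criterion"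
  proof
    assume "\<exists>x. fib_obj ?m D L0 x"
    then obtain b g where "fib_obj ?m D L0 (b, g)" by auto
    then show ?criterion by (rule fib_obj_imp_criterion[OF Du u0 iota(2)])
  next
    assume ?criterion
    then show "\<exists>x. fib_obj ?m D L0 x"
      using criterion_imp_fib_obj[OF Du u0 iota(2) CC_obj(2)] by blast
  qed
  ultimately show ?thesis by blast
qed

end
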